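(* Let $(G,\cdot)$ and $(H,\circ)$ be WIPLs and let $(A,B,C)$ be an isotopism from $(G,\cdot)$ to $(H,\circ)$. Then for all $x\in G$, $$J_\lambda R_x J_\rho B=C J_\lambda' R_{xA}' J_\rho' \quad\text{and}\quad J_\rho L_x J_\lambda A=C J_\rho' L_{xB}' J_\lambda'.$$
   Context: Maps are written on the right of their arguments ($xU$) and composed left to right: $UV$ means first apply $U$, then $V$. For a loop $(L,\cdot)$ with identity $e$, $x^\rho$ and $x^\lambda$ denote the right and left inverses of $x$ ($x x^\rho=e=x^\lambda x$), and $J_\rho:x\mapsto x^\rho$, $J_\lambda:x\mapsto x^\lambda$, $L_x:y\mapsto xy$, $R_x:y\mapsto yx$. For the loop $(H,\circ)$ (identity $e'$) the corresponding maps are denoted $J_\rho'$ ($y\mapsto y^{\rho'}$), $J_\lambda'$ ($y\mapsto y^{\lambda'}$), $L_y':z\mapsto y\circ z$, $R_y':z\mapsto z\circ y$. $L$ is a weak inverse property loop (WIPL) if $xy\cdot z=e$ implies $x\cdot yz=e$ for all $x,y,z\in L$. A triple $(U,V,W)$ of bijections $G\to H$ between loops $(G,\cdot)$ and $(H,\circ)$ is an isotopism if $xU\circ yV=(x\cdot y)W$ for all $x,y\in G$. *)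

theory Defs
  imports Main
begin

text \<open>A loop is modelled on a whole type: multiplication m with two-sided identity e,
  and unique solvability of a x = b and y a = b.\<close>
definition loop :: "('a \<Rightarrow> 'a \<Rightarrow> 'a) \<Rightarrow> 'a \<Rightarrow> bool" where
  "loop m e \<longleftrightarrow> (\<forall>x. m e x = x \<and> m x e = x)
     \<and> (\<forall>a b. \<exists>!x. m a x = b) \<and> (\<forall>a b. \<exists>!y. m y a = b)"

definition J_rho :: "('a \<Rightarrow> 'a \<Rightarrow> 'a) \<Rightarrow> 'a \<Rightarrow> 'a \<Rightarrow> 'a" where
  "J_rho m e x = (THE y. m x y = e)"

definition J_lambda :: "('a \<Rightarrow> 'a \<Rightarrow> 'a) \<Rightarrow> 'a \<Rightarrow> 'a \<Rightarrow> 'a" where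
  "J_lambda m e x = (THE y. m y x = e)"

definition Lmul :: "('a \<Rightarrow> 'a \<Rightarrow> 'a) \<Rightarrow> 'a \<Rightarrow> 'a \<Rightarrow> 'a" where
  "Lmul m x = (\<lambda>y. m x y)"

definition Rmul :: "('a \<Rightarrow> 'a \<Rightarrow> 'a) \<Rightarrow> 'a \<Rightarrow> 'a \<Rightarrow> 'a" where
  "Rmul m x = (\<lambda>y. m y x)"

definition WIPL :: "('a \<Rightarrow> 'a \<Rightarrow> 'a) \<Rightarrow> 'a \<Rightarrow> bool" where
  "WIPL m e \<longleftrightarrow> loop m e \<and> (\<forall>x y z. m (m x y) z = e \<longrightarrow> m x (m y z) = e)"

definition isotopism :: "('a \<Rightarrow> 'a \<Rightarrow> 'a) \<Rightarrow> ('b \<Rightarrow> 'b \<Rightarrow> 'b)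
    \<Rightarrow> ('a \<Rightarrow> 'b) \<Rightarrow> ('a \<Rightarrow> 'b) \<Rightarrow> ('a \<Rightarrow> 'b) \<Rightarrow> bool" where
  "isotopism m n U V W \<longleftrightarrow> bij U \<and> bij V \<and> bij W \<and> (\<forall>x y. n (U x) (V y) = W (m x y))"

end

theory Submission
  imports Defs
begin

(* In a weak inverse property loop the implication
   (xy)z = e ==> x(yz) = e also holds in the converse direction, and from this
   one gets the two inversion identities
       ((ab)^lambda a)^rho = b      and      (b (ab)^rho)^lambda = a.
   For the theorem, fix x and write an arbitrary argument as y = xz (resp. y = zx),
   which is possible since G is a loop.  By the first identity in G the left-hand
   side of the first equation sends xz to Bz; since C(xz) = xA o zB, the same
   identity in H shows that the right-hand side also sends xz to Bz.  The second
   equation is the mirror image, using the second identity. *)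

lemma loop_cancel_left:
  assumes "loop m e" and "m a x = m a y"
  shows "x = y"
proof -
  have "\<exists>!z. m a z = m a y" using assms(1) unfolding loop_def by blast
  then show ?thesis using assms(2) by blast
qed

lemma loop_cancel_right:
  assumes "loop m e" and "m x a = m y a"
  shows "x = y"
proof -
  have "\<exists>!z. m z a = m y a" using assms(1) unfolding loop_def by blast
  then show ?thesis using assms(2) by blast
qed

lemma J_rho_inverse:
  assumes "loop m e"
  shows "m x (J_rho m e x) = e"
proof -
  have "\<exists>!z. m x z = e" using assms unfolding loop_def by blast
  then show ?thesis unfolding J_rho_def by (rule theI')
qed

lemma J_lambda_inverse:
  assumes "loop m e"
  shows "m (J_lambda m e x) x = e"
proof -
  have "\<exists>!z. m z x = e" using assms unfolding loop_def by blast
  then show ?thesis unfolding J_lambda_def by (rule theI')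
qed

lemma J_rho_unique:
  assumes "loop m e" and "m x y = e"
  shows "J_rho m e x = y"
  using assms loop_cancel_left J_rho_inverse by metis

lemma J_lambda_unique:
  assumes "loop m e" and "m y x = e"
  shows "J_lambda m e x = y"
  using assms loop_cancel_right J_lambda_inverse by metis

lemma loop_left_divisible:
  assumes "loop m e"
  obtains z where "m x z = y"
  using assms unfolding loop_def by blast

lemma loop_right_divisible:
  assumes "loop m e"
  obtains z where "m z x = y"
  using assms unfolding loop_def by blast

lemma WIPL_assoc_identity:
  assumes W: "WIPL m e"
  shows "m (m x y) z = e \<longleftrightarrow> m x (m y z) = e"
proof
  show "m (m x y) z = e \<Longrightarrow> m x (m y z) = e"
    using W unfolding WIPL_def by blast
next
  assume xyz: "m x (m y z) = e"
  have L: "loop m e" using W unfolding WIPL_def by blast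
  define d where "d = J_rho m e (m x y)"
  have xyd: "m (m x y) d = e" unfolding d_def using J_rho_inverse[OF L] .
  then have "m x (m y d) = e" using W unfolding WIPL_def by blast
  with xyz have "m y d = m y z" using loop_cancel_left[OF L] by metis
  then have "d = z" using loop_cancel_left[OF L] by metis
  with xyd show "m (m x y) z = e" by simp
qed

lemma WIPL_J_rho_identity:
  assumes W: "WIPL m e"
  shows "J_rho m e (m (J_lambda m e (m a b)) a) = b"
proof -
  have L: "loop m e" using W unfolding WIPL_def by blast
  have "m (J_lambda m e (m a b)) (m a b) = e" using J_lambda_inverse[OF L] .
  then have "m (m (J_lambda m e (m a b)) a) b = e" using WIPL_assoc_identity[OF W] by blast
  then show ?thesis using J_rho_unique[OF L] by blast
qed

lemma WIPL_J_lambda_identity: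
  assumes W: "WIPL m e"
  shows "J_lambda m e (m b (J_rho m e (m a b))) = a"
proof -
  have L: "loop m e" using W unfolding WIPL_def by blast
  have "m (m a b) (J_rho m e (m a b)) = e" using J_rho_inverse[OF L] .
  then have "m a (m b (J_rho m e (m a b))) = e" using WIPL_assoc_identity[OF W] by blast
  then show ?thesis using J_lambda_unique[OF L] by blast
qed

text \<open>On a product \<open>xz\<close> both sides of the first equation take the value \<open>zB\<close>.\<close>

lemma isotopism_right_identity:
  assumes Wm: "WIPL m e" and Wn: "WIPL n e'" and iso: "isotopism m n A B C"
  shows "B (J_rho m e (m (J_lambda m e (m x z)) x))
           = J_rho n e' (n (J_lambda n e' (C (m x z))) (A x))"
proof -
  have "C (m x z) = n (A x) (B z)" using iso unfolding isotopism_def by simp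
  then show ?thesis
    using WIPL_J_rho_identity[OF Wm] WIPL_J_rho_identity[OF Wn] by simp
qed

text \<open>Symmetrically, on a product \<open>zx\<close> both sides of the second equation take
  the value \<open>zA\<close>.\<close>

lemma isotopism_left_identity:
  assumes Wm: "WIPL m e" and Wn: "WIPL n e'" and iso: "isotopism m n A B C"
  shows "A (J_lambda m e (m x (J_rho m e (m z x))))
           = J_lambda n e' (n (B x) (J_rho n e' (C (m z x))))"
proof -
  have "C (m z x) = n (A z) (B x)" using iso unfolding isotopism_def by simp
  then show ?thesis
    using WIPL_J_lambda_identity[OF Wm] WIPL_J_lambda_identity[OF Wn] by simp
qed

theorem mainTheorem7:
  fixes m :: "'a \<Rightarrow> 'a \<Rightarrow> 'a" and e :: 'a
    and n :: "'b \<Rightarrow> 'b \<Rightarrow> 'b" and e' :: 'b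
    and A B C :: "'a \<Rightarrow> 'b"
  assumes "WIPL m e" and "WIPL n e'" and "isotopism m n A B C"
  shows "\<forall>x. B \<circ> J_rho m e \<circ> Rmul m x \<circ> J_lambda m e
              = J_rho n e' \<circ> Rmul n (A x) \<circ> J_lambda n e' \<circ> C
           \<and> A \<circ> J_lambda m e \<circ> Lmul m x \<circ> J_rho m e
              = J_lambda n e' \<circ> Lmul n (B x) \<circ> J_rho n e' \<circ> C"
proof (intro allI conjI ext)
  fix x y
  have L: "loop m e" using assms(1) unfolding WIPL_def by blast
  obtain z where "m x z = y" using loop_left_divisible[OF L] .
  then show "(B \<circ> J_rho m e \<circ> Rmul m x \<circ> J_lambda m e) y
        = (J_rho n e' \<circ> Rmul n (A x) \<circ> J_lambda n e' \<circ> C) y"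
    using isotopism_right_identity[OF assms] by (auto simp: Rmul_def)
  obtain w where "m w x = y" using loop_right_divisible[OF L] .
  then show "(A \<circ> J_lambda m e \<circ> Lmul m x \<circ> J_rho m e) y
        = (J_lambda n e' \<circ> Lmul n (B x) \<circ> J_rho n e' \<circ> C) y"
    using isotopism_left_identity[OF assms] by (auto simp: Lmul_def)
qed

end
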